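(* Let $\chi=(X,\{e_i\},\{\gamma_i\},\{\varepsilon_i\})$ be a $\mathfrak g$-geometric crystal, let $f$ be an upper (resp. lower) half-decoration on $\chi$, and let $\theta:T'\to X$ be a positive structure for $(\chi,f)$. Let $(X_*(T')\cong\mathbb Z^{\dim T'},\{\tilde e_i\},\{{\rm wt}_i\},\{\tilde\varepsilon_i\})$ be the tropicalized (Langlands dual, ${}^L\mathfrak g$-) crystal, $\tilde f$ the tropicalization of $f\circ\theta$, and $\widetilde B_{\theta,f}:=\{\tilde x\in X_*(T')\mid \tilde f(\tilde x)\ge 0\}$, where $\tilde e_i^{\,n}(\tilde x)$ is declared to be $0$ whenever it does not lie in $\widetilde B_{\theta,f}$ (and $\tilde f_i=\tilde e_i^{-1}$). Then $\widetilde B_{\theta,f}$ with the restricted structure is an upper (resp. lower) normal crystal, i.e. for every $b\in\widetilde B_{\theta,f}$ and $i\in I$, $\tilde\varepsilon_i(b)=\max\{n\ge0\mid \tilde e_i^{\,n}b\in\widetilde B_{\theta,f}\}$ (resp. $\tilde\varphi_i(b)=\max\{n\ge0\mid \tilde f_i^{\,n}b\in\widetilde B_{\theta,f}\}$, where $\tilde\varphi_i=\tilde\varepsilon_i+{\rm wt}_i$).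
   Context: Setting: $\mathfrak g$ simple with Cartan matrix $A=(a_{ij})$, $a_{ij}=\alpha_j(h_i)$. A $\mathfrak g$-geometric crystal is $(X,\{e_i\}_{i\in I},\{\gamma_i\}_{i\in I},\{\varepsilon_i\}_{i\in I})$ where $X$ is an irreducible complex algebraic variety, $\gamma_i,\varepsilon_i$ are rational functions on $X$, and $e_i:\mathbb C^\times\times X\to X$, $(c,x)\mapsto e_i^c(x)$, are unital rational $\mathbb C^\times$-actions, such that $(\{1\}\times X)\cap{\rm dom}(e_i)$ is open dense in $\{1\}\times X$; $\gamma_j(e_i^c(x))=c^{a_{ij}}\gamma_j(x)$; the $e_i$ satisfy the Verma relations ($e_i^{c_1}e_j^{c_2}=e_j^{c_2}e_i^{c_1}$ if $a_{ij}=a_{ji}=0$; $e_i^{c_1}e_j^{c_1c_2}e_i^{c_2}=e_j^{c_2}e_i^{c_1c_2}e_j^{c_1}$ if $a_{ij}=a_{ji}=-1$; $e_i^{c_1}e_j^{c_1^2c_2}e_i^{c_1c_2}e_j^{c_2}=e_j^{c_2}e_i^{c_1c_2}e_j^{c_1^2c_2}e_i^{c_1}$ if $a_{ij}=-2,a_{ji}=-1$; $e_i^{c_1}e_j^{c_1^3c_2}e_i^{c_1^2c_2}e_j^{c_1^3c_2^2}e_i^{c_1c_2}e_j^{c_2}=e_j^{c_2}e_i^{c_1c_2}e_j^{c_1^3c_2^2}e_i^{c_1^2c_2}e_j^{c_1^3c_2}e_i^{c_1}$ if $a_{ij}=-3,a_{ji}=-1$); and $\varepsilon_i(e_i^c(x))=c^{-1}\varepsilon_i(x)$,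 $\varepsilon_i(e_j^c(x))=\varepsilon_i(x)$ if $a_{ij}=a_{ji}=0$. Put $\varphi_i:=\varepsilon_i\gamma_i$. A rational function $f$ on $X$ is an upper half-decoration if $f(e_i^c(x))=f(x)+(c^{-1}-1)\varepsilon_i(x)$, and a lower half-decoration if $f(e_i^c(x))=f(x)+(c-1)\varphi_i(x)$, for all $i,c,x$. A positive structure is a birational map $\theta:T'\to X$ from an algebraic torus $T'\cong(\mathbb C^\times)^m$ such that $\theta^{-1}\circ e_i\circ\theta:\mathbb C^\times\times T'\to T'$ and $\gamma_i\circ\theta,\varepsilon_i\circ\theta,f\circ\theta$ are positive rational maps (in the torus coordinates, ratios of polynomials with positive coefficients). Tropicalization of a positive rational function in coordinates $c_1,\dots,c_m$ (and $c$) is the piecewise-linear function on $\mathbb Z^m$ (and $\mathbb Z$) obtained by the valuation $\mathbb V(g)=-\deg g(x^{-1})$, i.e. replacing multiplication by $+$, division by $-$, addition by $\min$, positive constants by $0$, and $c_j$ by $x_j$. Thus $\tilde e_i^{\,n}$ ($n\in\mathbb Z$) is the tropicalization of $\theta^{-1}\circ e_i^c\circ\theta$, ${\rm wt}_i$ that of $\gamma_i\circ\theta$, $\tilde\varepsilon_i$ that of $\varepsilon_i\circ\theta$; $\tilde e_i=\tilde e_i^{\,1}$, $\tilde f_i=\tilde e_i^{\,-1}$. *)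

theory Defs
  imports Complex_Main
begin

datatype 'v pexp =
    PVar 'v
  | PConst real
  | PAdd "'v pexp" "'v pexp"
  | PMul "'v pexp" "'v pexp"
  | PDiv "'v pexp" "'v pexp"

fun pos_exp :: "'v pexp \<Rightarrow> bool" where
  "pos_exp (PVar v) = True"
| "pos_exp (PConst r) = (r > 0)"
| "pos_exp (PAdd p q) = (pos_exp p \<and> pos_exp q)"
| "pos_exp (PMul p q) = (pos_exp p \<and> pos_exp q)"
| "pos_exp (PDiv p q) = (pos_exp p \<and> pos_exp q)"

fun peval :: "('v \<Rightarrow> real) \<Rightarrow> 'v pexp \<Rightarrow> real" where
  "peval x (PVar v) = x v"
| "peval x (PConst r) = r"
| "peval x (PAdd p q) = peval x p + peval x q"
| "peval x (PMul p q) = peval x p * peval x q"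
| "peval x (PDiv p q) = peval x p / peval x q"

fun ptrop :: "('v \<Rightarrow> int) \<Rightarrow> 'v pexp \<Rightarrow> int" where
  "ptrop x (PVar v) = x v"
| "ptrop x (PConst r) = 0"
| "ptrop x (PAdd p q) = min (ptrop x p) (ptrop x q)"
| "ptrop x (PMul p q) = ptrop x p + ptrop x q"
| "ptrop x (PDiv p q) = ptrop x p - ptrop x q"

text \<open>Environment with the extra parameter c (variable None) and torus coordinates (Some v).\<close>
definition cenv :: "'a \<Rightarrow> ('v \<Rightarrow> 'a) \<Rightarrow> 'v option \<Rightarrow> 'a" where
  "cenv c x o' = (case o' of None \<Rightarrow> c | Some v \<Rightarrow> x v)"

definition pos_pt :: "('v \<Rightarrow> real) \<Rightarrow> bool" where
  "pos_pt x \<longleftrightarrow> (\<forall>v. x v > 0)"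

text \<open>The action \<theta>^{-1} o e_i^c o \<theta> on the torus, given coordinatewise by positive expressions
  in (c, x).\<close>
definition gact :: "('i \<Rightarrow> 'v \<Rightarrow> 'v option pexp) \<Rightarrow> 'i \<Rightarrow> real \<Rightarrow> ('v \<Rightarrow> real) \<Rightarrow> ('v \<Rightarrow> real)" where
  "gact E i c x = (\<lambda>k. peval (cenv c x) (E i k))"

definition tact :: "('i \<Rightarrow> 'v \<Rightarrow> 'v option pexp) \<Rightarrow> 'i \<Rightarrow> int \<Rightarrow> ('v \<Rightarrow> int) \<Rightarrow> ('v \<Rightarrow> int)" where
  "tact E i n x = (\<lambda>k. ptrop (cenv n x) (E i k))"

text \<open>Indecomposable generalized Cartan matrix of finite type (symmetrizable with positive
  definite symmetrization) = Cartan matrix of a simple finite-dimensional Lie algebra.\<close>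
definition simple_cartan :: "('i::finite \<Rightarrow> 'i \<Rightarrow> int) \<Rightarrow> bool" where
  "simple_cartan A \<longleftrightarrow>
     (\<forall>i. A i i = 2) \<and> (\<forall>i j. i \<noteq> j \<longrightarrow> A i j \<le> 0) \<and> (\<forall>i j. A i j = 0 \<longleftrightarrow> A j i = 0) \<and>
     (\<exists>d::'i \<Rightarrow> real. (\<forall>i. d i > 0) \<and> (\<forall>i j. d i * of_int (A i j) = d j * of_int (A j i)) \<and>
        (\<forall>y::'i \<Rightarrow> real. (\<exists>i. y i \<noteq> 0) \<longrightarrow> (\<Sum>i\<in>UNIV. \<Sum>j\<in>UNIV. d i * of_int (A i j) * y i * y j) > 0)) \<and>
     (\<forall>S::'i set. S \<noteq> {} \<and> S \<noteq> UNIV \<longrightarrow> (\<exists>i\<in>S. \<exists>j. j \<notin> S \<and> A i j \<noteq> 0))"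

text \<open>E i k: k-th coordinate of \<theta>^{-1} o e_i^c o \<theta>;  G i = \<gamma>_i o \<theta>;  Ep i = \<epsilon>_i o \<theta>.
  Identities of rational functions are expressed on the Zariski dense positive real orthant.\<close>
definition pos_geom_crystal ::
  "('i::finite \<Rightarrow> 'i \<Rightarrow> int) \<Rightarrow> ('i \<Rightarrow> 'v \<Rightarrow> 'v option pexp) \<Rightarrow> ('i \<Rightarrow> 'v pexp) \<Rightarrow> ('i \<Rightarrow> 'v pexp) \<Rightarrow> bool" where
  "pos_geom_crystal A E G Ep \<longleftrightarrow>
     (\<forall>i k. pos_exp (E i k)) \<and> (\<forall>i. pos_exp (G i)) \<and> (\<forall>i. pos_exp (Ep i)) \<and>
     \<comment> \<open>unital action\<close>
     (\<forall>i x. pos_pt x \<longrightarrow> gact E i 1 x = x) \<and>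
     (\<forall>i c1 c2 x. pos_pt x \<and> c1 > 0 \<and> c2 > 0 \<longrightarrow>
        gact E i c1 (gact E i c2 x) = gact E i (c1 * c2) x) \<and>
     \<comment> \<open>gamma\<close>
     (\<forall>i j c x. pos_pt x \<and> c > 0 \<longrightarrow>
        peval (gact E i c x) (G j) = c powi (A i j) * peval x (G j)) \<and>
     \<comment> \<open>Verma relations\<close>
     (\<forall>i j c1 c2 x. pos_pt x \<and> c1 > 0 \<and> c2 > 0 \<and> A i j = 0 \<and> A j i = 0 \<longrightarrow>
        gact E i c1 (gact E j c2 x) = gact E j c2 (gact E i c1 x)) \<and>
     (\<forall>i j c1 c2 x. pos_pt x \<and> c1 > 0 \<and> c2 > 0 \<and> A i j = -1 \<and> A j i = -1 \<longrightarrow>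
        gact E i c1 (gact E j (c1*c2) (gact E i c2 x)) =
        gact E j c2 (gact E i (c1*c2) (gact E j c1 x))) \<and>
     (\<forall>i j c1 c2 x. pos_pt x \<and> c1 > 0 \<and> c2 > 0 \<and> A i j = -2 \<and> A j i = -1 \<longrightarrow>
        gact E i c1 (gact E j (c1^2*c2) (gact E i (c1*c2) (gact E j c2 x))) =
        gact E j c2 (gact E i (c1*c2) (gact E j (c1^2*c2) (gact E i c1 x)))) \<and>
     (\<forall>i j c1 c2 x. pos_pt x \<and> c1 > 0 \<and> c2 > 0 \<and> A i j = -3 \<and> A j i = -1 \<longrightarrow>
        gact E i c1 (gact E j (c1^3*c2) (gact E i (c1^2*c2) (gact E j (c1^3*c2^2)
          (gact E i (c1*c2) (gact E j c2 x))))) =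
        gact E j c2 (gact E i (c1*c2) (gact E j (c1^3*c2^2) (gact E i (c1^2*c2)
          (gact E j (c1^3*c2) (gact E i c1 x)))))) \<and>
     \<comment> \<open>epsilon\<close>
     (\<forall>i c x. pos_pt x \<and> c > 0 \<longrightarrow> peval (gact E i c x) (Ep i) = inverse c * peval x (Ep i)) \<and>
     (\<forall>i j c x. pos_pt x \<and> c > 0 \<and> A i j = 0 \<and> A j i = 0 \<longrightarrow>
        peval (gact E j c x) (Ep i) = peval x (Ep i))"

definition upper_half_dec :: "('i \<Rightarrow> 'v \<Rightarrow> 'v option pexp) \<Rightarrow> ('i \<Rightarrow> 'v pexp) \<Rightarrow> 'v pexp \<Rightarrow> bool" where
  "upper_half_dec E Ep F \<longleftrightarrow>
     (\<forall>i c x. pos_pt x \<and> c > 0 \<longrightarrow>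
        peval (gact E i c x) F = peval x F + (inverse c - 1) * peval x (Ep i))"

definition lower_half_dec ::
  "('i \<Rightarrow> 'v \<Rightarrow> 'v option pexp) \<Rightarrow> ('i \<Rightarrow> 'v pexp) \<Rightarrow> ('i \<Rightarrow> 'v pexp) \<Rightarrow> 'v pexp \<Rightarrow> bool" where
  "lower_half_dec E G Ep F \<longleftrightarrow>
     (\<forall>i c x. pos_pt x \<and> c > 0 \<longrightarrow>
        peval (gact E i c x) F = peval x F + (c - 1) * (peval x (Ep i) * peval x (G i)))"

definition tB :: "'v pexp \<Rightarrow> ('v \<Rightarrow> int) set" where
  "tB F = {b. ptrop b F \<ge> 0}"

end

theory Submission
  imports Defs
begin

text \<open>Evaluating a positive expression along the curve \<open>t \<mapsto> (t^(b v))\<^sub>v\<close> gives a function of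
  exact order \<open>t^(trop b)\<close> as \<open>t \<rightarrow> 0+\<close>, because positive coefficients rule out cancellation in
  sums. Hence two positive expressions that agree on the positive orthant have the same
  tropicalization. Applied to the decoration identity, rewritten subtraction-free as
  \<open>f(e\<^sub>i\<^sup>c x) + \<epsilon>\<^sub>i(x) = f(x) + c\<^sup>-\<^sup>1 \<epsilon>\<^sub>i(x)\<close>, this yields
  \<open>min(f\<tilde>(e\<tilde>\<^sub>i\<^sup>n b), \<epsilon>\<tilde>\<^sub>i(b)) = min(f\<tilde>(b), \<epsilon>\<tilde>\<^sub>i(b) - n)\<close>, from which
  \<open>\<epsilon>\<tilde>\<^sub>i(b) = max {n \<ge> 0. f\<tilde>(e\<tilde>\<^sub>i\<^sup>n b) \<ge> 0}\<close> follows whenever \<open>f\<tilde>(b) \<ge> 0\<close>.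
  The lower case is the same with \<open>\<phi>\<^sub>i\<close> and \<open>c\<close> in place of \<open>\<epsilon>\<^sub>i\<close> and \<open>c\<^sup>-\<^sup>1\<close>.\<close>

definition power_order :: "(real \<Rightarrow> real) \<Rightarrow> real \<Rightarrow> bool" where
  "power_order f d \<longleftrightarrow>
     (\<exists>C1>0. \<exists>C2>0. \<forall>t\<in>{0<..1}. C1 * t powr d \<le> f t \<and> f t \<le> C2 * t powr d)"

lemma power_orderI:
  assumes "C1 > 0" "C2 > 0"
    and "\<And>t. t \<in> {0<..1} \<Longrightarrow> C1 * t powr d \<le> f t \<and> f t \<le> C2 * t powr d"
  shows "power_order f d"
  using assms unfolding power_order_def by blast

lemma power_order_const: "r > 0 \<Longrightarrow> power_order (\<lambda>_. r) 0"
  by (rule power_orderI[of r r]) auto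

lemma power_order_powr: "power_order (\<lambda>t. t powr d) d"
  by (rule power_orderI[of 1 1]) auto

lemma power_order_add:
  assumes "power_order f a" "power_order g b"
  shows "power_order (\<lambda>t. f t + g t) (min a b)"
proof -
  obtain C1 C2 D1 D2 where C: "C1 > 0" "C2 > 0" "D1 > 0" "D2 > 0"
    and f: "\<And>t. t \<in> {0<..1} \<Longrightarrow> C1 * t powr a \<le> f t \<and> f t \<le> C2 * t powr a"
    and g: "\<And>t. t \<in> {0<..1} \<Longrightarrow> D1 * t powr b \<le> g t \<and> g t \<le> D2 * t powr b"
    using assms unfolding power_order_def by blast
  have "min C1 D1 * t powr min a b \<le> f t + g t \<and> f t + g t \<le> (C2 + D2) * t powr min a b"
    if t: "t \<in> {0<..1}" for t
  proof -
    have le_min: "t powr a \<le> t powr min a b" "t powr b \<le> t powr min a b"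
      using t by (auto intro!: powr_mono')
    have "min C1 D1 * t powr min a b \<le> C1 * t powr a + D1 * t powr b"
    proof -
      have "0 \<le> C1 * t powr a" "0 \<le> D1 * t powr b" using C by auto
      moreover have "min C1 D1 * t powr min a b \<le> C1 * t powr a \<or>
          min C1 D1 * t powr min a b \<le> D1 * t powr b"
        by (cases "a \<le> b") (auto intro: mult_right_mono)
      ultimately show ?thesis by linarith
    qed
    moreover have "C2 * t powr a + D2 * t powr b \<le> (C2 + D2) * t powr min a b"
      using le_min C by (simp add: distrib_right add_mono)
    ultimately show ?thesis using f[OF t] g[OF t] by linarith
  qed
  then show ?thesis using C by (intro power_orderI[of "min C1 D1" "C2 + D2"]) auto
qed

lemma power_order_mult:
  assumes "power_order f a" "power_order g b"
  shows "power_order (\<lambda>t. f t * g t) (a + b)"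
proof -
  obtain C1 C2 D1 D2 where C: "C1 > 0" "C2 > 0" "D1 > 0" "D2 > 0"
    and f: "\<And>t. t \<in> {0<..1} \<Longrightarrow> C1 * t powr a \<le> f t \<and> f t \<le> C2 * t powr a"
    and g: "\<And>t. t \<in> {0<..1} \<Longrightarrow> D1 * t powr b \<le> g t \<and> g t \<le> D2 * t powr b"
    using assms unfolding power_order_def by blast
  have "(C1 * D1) * t powr (a + b) \<le> f t * g t \<and> f t * g t \<le> (C2 * D2) * t powr (a + b)"
    if t: "t \<in> {0<..1}" for t
  proof -
    have pos: "0 \<le> C1 * t powr a" "0 \<le> D1 * t powr b" using C by auto
    have "(C1 * t powr a) * (D1 * t powr b) \<le> f t * g t"
      using f[OF t] g[OF t] pos by (intro mult_mono) auto
    moreover have "f t * g t \<le> (C2 * t powr a) * (D2 * t powr b)"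
      using f[OF t] g[OF t] pos by (intro mult_mono) auto
    ultimately show ?thesis by (simp add: powr_add algebra_simps)
  qed
  then show ?thesis using C by (intro power_orderI[of "C1 * D1" "C2 * D2"]) auto
qed

lemma power_order_divide:
  assumes "power_order f a" "power_order g b"
  shows "power_order (\<lambda>t. f t / g t) (a - b)"
proof -
  obtain C1 C2 D1 D2 where C: "C1 > 0" "C2 > 0" "D1 > 0" "D2 > 0"
    and f: "\<And>t. t \<in> {0<..1} \<Longrightarrow> C1 * t powr a \<le> f t \<and> f t \<le> C2 * t powr a"
    and g: "\<And>t. t \<in> {0<..1} \<Longrightarrow> D1 * t powr b \<le> g t \<and> g t \<le> D2 * t powr b"
    using assms unfolding power_order_def by blast
  have "(C1 / D2) * t powr (a - b) \<le> f t / g t \<and> f t / g t \<le> (C2 / D1) * t powr (a - b)"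
    if t: "t \<in> {0<..1}" for t
  proof -
    have pos: "0 < C1 * t powr a" "0 < D1 * t powr b" using C t by auto
    have "(C1 * t powr a) / (D2 * t powr b) \<le> f t / g t"
      using f[OF t] g[OF t] pos by (intro frac_le) auto
    moreover have "f t / g t \<le> (C2 * t powr a) / (D1 * t powr b)"
      using f[OF t] g[OF t] pos by (intro frac_le) auto
    ultimately show ?thesis by (simp add: powr_diff)
  qed
  then show ?thesis using C by (intro power_orderI[of "C1 / D2" "C2 / D1"]) auto
qed

lemma power_order_upper_lower_le:
  fixes C D a b :: real
  assumes "C > 0" "D > 0" and bound: "\<And>t. t \<in> {0<..1} \<Longrightarrow> C * t powr a \<le> D * t powr b"
  shows "b \<le> a"
proof (rule ccontr)
  assume "\<not> b \<le> a"
  define s where "s = (C / (2 * D)) powr (1 / (b - a))"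
  define t where "t = min 1 s"
  have t: "t \<in> {0<..1}" using assms by (auto simp: t_def s_def)
  have "t powr (b - a) \<le> s powr (b - a)"
    using t \<open>\<not> b \<le> a\<close> by (intro powr_mono2) (auto simp: t_def)
  also have "\<dots> = C / (2 * D)"
    using assms \<open>\<not> b \<le> a\<close> by (simp add: s_def powr_powr)
  finally have small: "D * t powr (b - a) \<le> C / 2"
    using assms by (simp add: field_simps)
  have "C * t powr a \<le> D * t powr (b - a) * t powr a"
    using bound[OF t] by (simp add: mult.assoc powr_add[symmetric])
  also have "\<dots> \<le> C / 2 * t powr a"
    using small by (intro mult_right_mono) auto
  finally show False using assms t by simp
qed

lemma power_order_unique:
  assumes "power_order f a" "power_order f b"
  shows "a = b"
proof -
  obtain C1 C2 D1 D2 where C: "C1 > 0" "C2 > 0" "D1 > 0" "D2 > 0"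
    and f: "\<And>t. t \<in> {0<..1} \<Longrightarrow> C1 * t powr a \<le> f t \<and> f t \<le> C2 * t powr a"
    and g: "\<And>t. t \<in> {0<..1} \<Longrightarrow> D1 * t powr b \<le> f t \<and> f t \<le> D2 * t powr b"
    using assms unfolding power_order_def by blast
  have "C1 * t powr a \<le> D2 * t powr b" "D1 * t powr b \<le> C2 * t powr a" if "t \<in> {0<..1}" for t
    using f[OF that] g[OF that] by linarith+
  then have "b \<le> a" "a \<le> b" using C by (metis power_order_upper_lower_le)+
  then show ?thesis by simp
qed

lemma power_order_peval:
  "pos_exp p \<Longrightarrow> power_order (\<lambda>t. peval (\<lambda>v. t powr b v) p) (ptrop b p)"
proof (induction p)
  case (PAdd p q)
  then show ?case using power_order_add by (fastforce simp: of_int_min)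
qed (auto intro: power_order_const power_order_powr power_order_mult power_order_divide)

theorem ptrop_eq_if_peval_eq:
  assumes "pos_exp p" "pos_exp q" "\<And>y. pos_pt y \<Longrightarrow> peval y p = peval y q"
  shows "ptrop b p = ptrop b q"
proof -
  have "peval (\<lambda>v. t powr b v) p = peval (\<lambda>v. t powr b v) q" if "t \<in> {0<..1}" for t
    using that by (intro assms(3)) (auto simp: pos_pt_def)
  then have "power_order (\<lambda>t. peval (\<lambda>v. t powr b v) p) (ptrop b q)"
    using power_order_peval[OF assms(2)] by (simp add: power_order_def)
  with power_order_peval[OF assms(1)] have "real_of_int (ptrop b p) = ptrop b q"
    by (rule power_order_unique)
  then show ?thesis by simp
qed

fun psubst :: "('v \<Rightarrow> 'w pexp) \<Rightarrow> 'v pexp \<Rightarrow> 'w pexp" where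
  "psubst s (PVar v) = s v"
| "psubst s (PConst r) = PConst r"
| "psubst s (PAdd p q) = PAdd (psubst s p) (psubst s q)"
| "psubst s (PMul p q) = PMul (psubst s p) (psubst s q)"
| "psubst s (PDiv p q) = PDiv (psubst s p) (psubst s q)"

lemma peval_psubst: "peval y (psubst s p) = peval (\<lambda>v. peval y (s v)) p"
  by (induction p) auto

lemma ptrop_psubst: "ptrop y (psubst s p) = ptrop (\<lambda>v. ptrop y (s v)) p"
  by (induction p) auto

lemma pos_exp_psubst: "pos_exp p \<Longrightarrow> (\<And>v. pos_exp (s v)) \<Longrightarrow> pos_exp (psubst s p)"
  by (induction p) auto

text \<open>An expression on the torus, viewed as an expression in \<open>(c, x)\<close> not involving \<open>c\<close>.\<close>
abbreviation plift :: "'v pexp \<Rightarrow> 'v option pexp" where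
  "plift \<equiv> psubst (\<lambda>v. PVar (Some v))"

lemma pos_exp_plift: "pos_exp p \<Longrightarrow> pos_exp (plift p)"
  by (rule pos_exp_psubst) auto

lemma peval_plift: "peval y (plift p) = peval (\<lambda>v. y (Some v)) p"
  by (simp add: peval_psubst)

lemma ptrop_plift: "ptrop (cenv n b) (plift p) = ptrop b p"
  by (simp add: ptrop_psubst cenv_def)

lemma peval_psubst_action:
  "peval y (psubst (E i) F) = peval (gact E i (y None) (\<lambda>v. y (Some v))) F"
proof -
  have "cenv (y None) (\<lambda>v. y (Some v)) = y"
    by (auto simp: cenv_def fun_eq_iff split: option.split)
  then show ?thesis by (simp add: peval_psubst gact_def)
qed

lemma ptrop_psubst_action: "ptrop (cenv n b) (psubst (E i) F) = ptrop (tact E i n b) F"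
  by (simp add: ptrop_psubst tact_def)

lemma ptrop_upper_half_dec:
  fixes E :: "'i \<Rightarrow> 'v \<Rightarrow> 'v option pexp"
  assumes "upper_half_dec E Ep F" "pos_exp F" "\<And>k. pos_exp (E i k)" "pos_exp (Ep i)"
  shows "min (ptrop (tact E i n b) F) (ptrop b (Ep i)) = min (ptrop b F) (ptrop b (Ep i) - n)"
proof -
  let ?L = "PAdd (psubst (E i) F) (plift (Ep i))"
  let ?R = "PAdd (plift F) (PMul (PDiv (PConst 1) (PVar None)) (plift (Ep i)))"
  have "ptrop (cenv n b) ?L = ptrop (cenv n b) ?R"
  proof (rule ptrop_eq_if_peval_eq)
    show "pos_exp ?L" "pos_exp ?R"
      using assms(2-4) by (auto intro: pos_exp_psubst pos_exp_plift)
    fix y :: "'v option \<Rightarrow> real"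
    assume "pos_pt y"
    then have "y None > 0" "pos_pt (\<lambda>v. y (Some v))" by (auto simp: pos_pt_def)
    with assms(1) show "peval y ?L = peval y ?R"
      by (simp add: upper_half_dec_def peval_plift peval_psubst_action algebra_simps
          divide_inverse)
  qed
  then show ?thesis by (simp add: ptrop_plift ptrop_psubst_action cenv_def)
qed

lemma ptrop_lower_half_dec:
  fixes E :: "'i \<Rightarrow> 'v \<Rightarrow> 'v option pexp"
  assumes "lower_half_dec E G Ep F" "pos_exp F" "\<And>k. pos_exp (E i k)"
    "pos_exp (Ep i)" "pos_exp (G i)"
  shows "min (ptrop (tact E i (- n) b) F) (ptrop b (Ep i) + ptrop b (G i))
    = min (ptrop b F) (ptrop b (Ep i) + ptrop b (G i) - n)"
proof -
  let ?\<phi> = "PMul (plift (Ep i)) (plift (G i))"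
  let ?L = "PAdd (psubst (E i) F) ?\<phi>"
  let ?R = "PAdd (plift F) (PMul (PVar None) ?\<phi>)"
  have "ptrop (cenv (- n) b) ?L = ptrop (cenv (- n) b) ?R"
  proof (rule ptrop_eq_if_peval_eq)
    show "pos_exp ?L" "pos_exp ?R"
      using assms(2-5) by (auto intro: pos_exp_psubst pos_exp_plift)
    fix y :: "'v option \<Rightarrow> real"
    assume "pos_pt y"
    then have "y None > 0" "pos_pt (\<lambda>v. y (Some v))" by (auto simp: pos_pt_def)
    with assms(1) show "peval y ?L = peval y ?R"
      by (simp add: lower_half_dec_def peval_plift peval_psubst_action algebra_simps)
  qed
  then show ?thesis by (simp add: ptrop_plift ptrop_psubst_action cenv_def)
qed

lemma greatest_nonneg_of_min_shift:
  fixes g :: "int \<Rightarrow> int"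
  assumes shift: "\<And>n. min (g n) e = min g0 (e - n)" and "g0 \<ge> 0"
  shows "e \<in> {n. n \<ge> 0 \<and> g n \<ge> 0} \<and> (\<forall>n\<in>{n. n \<ge> 0 \<and> g n \<ge> 0}. n \<le> e)"
proof -
  have "min (g e) e = 0" using shift[of e] \<open>g0 \<ge> 0\<close> by simp
  moreover have "n \<le> e" if "n \<ge> 0" "g n \<ge> 0" for n
    using shift[of n] that \<open>min (g e) e = 0\<close> by linarith
  ultimately show ?thesis by auto
qed

theorem proposition4p7:
  fixes A :: "'i::finite \<Rightarrow> 'i \<Rightarrow> int"
    and E :: "'i \<Rightarrow> 'v::finite \<Rightarrow> 'v option pexp"
    and G Ep :: "'i \<Rightarrow> 'v pexp"
    and F :: "'v pexp"
  assumes "simple_cartan A"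
    and "pos_geom_crystal A E G Ep"
    and "pos_exp F"
  shows "(upper_half_dec E Ep F \<longrightarrow>
            (\<forall>b\<in>tB F. \<forall>i.
               ptrop b (Ep i) \<in> {n. n \<ge> 0 \<and> tact E i n b \<in> tB F} \<and>
               (\<forall>n\<in>{n. n \<ge> 0 \<and> tact E i n b \<in> tB F}. n \<le> ptrop b (Ep i))))
       \<and> (lower_half_dec E G Ep F \<longrightarrow>
            (\<forall>b\<in>tB F. \<forall>i.
               ptrop b (Ep i) + ptrop b (G i) \<in> {n. n \<ge> 0 \<and> tact E i (- n) b \<in> tB F} \<and>
               (\<forall>n\<in>{n. n \<ge> 0 \<and> tact E i (- n) b \<in> tB F}. n \<le> ptrop b (Ep i) + ptrop b (G i))))"
proof -
  from assms(2) have pos: "\<And>i k. pos_exp (E i k)" "\<And>i. pos_exp (G i)" "\<And>i. pos_exp (Ep i)"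
    by (auto simp: pos_geom_crystal_def)
  have upper: "\<forall>b\<in>tB F. \<forall>i. ptrop b (Ep i) \<in> {n. n \<ge> 0 \<and> tact E i n b \<in> tB F} \<and>
      (\<forall>n\<in>{n. n \<ge> 0 \<and> tact E i n b \<in> tB F}. n \<le> ptrop b (Ep i))"
    if "upper_half_dec E Ep F"
    using greatest_nonneg_of_min_shift[OF ptrop_upper_half_dec[OF that assms(3) pos(1,3)]]
    by (simp add: tB_def)
  have lower: "\<forall>b\<in>tB F. \<forall>i. ptrop b (Ep i) + ptrop b (G i) \<in> {n. n \<ge> 0 \<and> tact E i (- n) b \<in> tB F} \<and>
      (\<forall>n\<in>{n. n \<ge> 0 \<and> tact E i (- n) b \<in> tB F}. n \<le> ptrop b (Ep i) + ptrop b (G i))"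
    if "lower_half_dec E G Ep F"
    using greatest_nonneg_of_min_shift[OF ptrop_lower_half_dec[OF that assms(3) pos(1,3,2)]]
    by (simp add: tB_def)
  show ?thesis using upper lower by blast
qed

end
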